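(* For all formulas $\varphi,\psi,\vartheta$ and every program term $A$: (1) $(\neg\varphi)A\preceq\varphi\Rightarrow\psi$ and $A\psi\preceq\varphi\Rightarrow\psi$; in particular $\neg\varphi\preceq\varphi\Rightarrow\psi$, $\psi\preceq\varphi\Rightarrow\psi$, and the test $\varphi\to\psi$ satisfies $(\varphi\to\psi)\preceq\varphi\Rightarrow\psi$. (2) $\vartheta\preceq\varphi\Rightarrow\psi$ (with $\vartheta$ used as a test) iff $\vartheta\models\varphi\to\psi$; consequently, in every $\mathcal L$-model $M$, $$\to_{\varphi\Rightarrow\psi}=\to_{\varphi\to\psi}\cup\bigcup\{\to_A: A\in\tilde\Sigma^+,\ \forall w,w'\,(w\to_Aw'\text{ and }w\models^M\varphi\text{ imply }w'\models^M\psi)\},$$ where $\tilde\Sigma^+$ denotes finite nonempty compositions of elements of $\tilde\Sigma$.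
   Context: Fix countable, nonempty, pairwise disjoint sets $\mathrm{AtF}$ (atomic formulas), $\mathrm{AtP}$ (atomic programs) and $I$ (agent names). The formulas $\mathcal L_s$ and programs $\mathcal L_a$ of Type PDL ($\tau$PDL) are generated by $\varphi::=p\mid\neg\varphi\mid\forall A.\varphi\mid \mathsf C_\imath A$ and $A::=a\mid\varphi\mid\varphi\Rightarrow\varphi\mid AA\mid A+A\mid A^*$ with $p\in\mathrm{AtF}$, $a\in\mathrm{AtP}$, $\imath\in I$ (a formula used as a program is a test; $AB$ is sequential composition, $A+B$ choice, $\forall A.\varphi$ is the box $[A]\varphi$). Other connectives are abbreviations, e.g. $\varphi\to\psi:=\forall\varphi.\psi$. $\mathsf{tt}$ is a fixed tautology, $\mathsf{ff}=\neg\mathsf{tt}$, $\Omega:=\mathsf{tt}\Rightarrow\mathsf{tt}$, $\mathrm{AtP}_\Omega=\mathrm{AtP}\cup\{\Omega\}$. $\Sigma$ is the set of programs of the forms $a$, $\varphi$, $\varphi\Rightarrow\psi$; $\tilde\Sigma$ the set of programs of the forms $a$, $\varphi\Rightarrow\psi$; $\Sigma^+$ the finite nonempty sequential compositions of elements of $\Sigma$. An $\mathcal L$-model $M$ consists of a nonempty set $W$, a relation $\to_a\subseteq W\times W$ for each $a\in\mathrm{AtP}$, a valuation $\rho:\mathrm{AtF}\to2^W$, and for each $\imath\in I$, $w\in W$ a set $\imath^M(w)\subseteq\bigcup\{\to_A:A\in\Sigma^+\}$. Interpretation: $[\![p]\!]=\rho(p)$, $[\![\neg\varphi]\!]=W\setminus[\![\varphi]\!]$,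 $[\![\forall A.\varphi]\!]=\{w:\forall w'(w\to_Aw'\Rightarrow w'\in[\![\varphi]\!])\}$; $\to_\varphi=\{(w,w):w\in[\![\varphi]\!]\}$, $\to_{AB}=\to_A\circ\to_B$ (first $A$ then $B$), $\to_{A+B}=\to_A\cup\to_B$, $\to_{A^*}=\bigcup_{n\ge0}(\to_A)^n$, $\to_{\varphi\Rightarrow\psi}=\bigcup\{\to_A: A\in\Sigma^+,\ \forall w\in[\![\varphi]\!]\,\forall w'(w\to_Aw'\Rightarrow w'\in[\![\psi]\!])\}$. Capabilities: $[\![\mathsf C_\imath a]\!]=\{w:\to_a\subseteq\imath^M(w)\}$, $[\![\mathsf C_\imath\varphi]\!]=W$, $[\![\mathsf C_\imath(\varphi\Rightarrow\psi)]\!]=\{w:\to_{\varphi\Rightarrow\psi}\subseteq\imath^M(w)\}$, $[\![\mathsf C_\imath(AB)]\!]=\{w\in[\![\mathsf C_\imath A]\!]:\forall w'(w\to_Aw'\Rightarrow w'\in[\![\mathsf C_\imath B]\!])\}$, $[\![\mathsf C_\imath(A+B)]\!]=[\![\mathsf C_\imath A]\!]\cap[\![\mathsf C_\imath B]\!]$, $[\![\mathsf C_\imath A^*]\!]=\bigcup\{[\![\varphi]\!]:[\![\varphi]\!]\subseteq[\![\mathsf C_\imath A]\!]\cap[\![\forall A.\varphi]\!]\}$. Normality condition: $\imath^M(w)=\bigcup\{\to_{\varphi\Rightarrow\psi}:w\in[\![\mathsf C_\imath(\varphi\Rightarrow\psi)]\!]\}\cup\bigcup\{\to_a:w\in[\![\mathsf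 C_\imath a]\!]\}$. We write $w\models^M\varphi$ iff $w\in[\![\varphi]\!]$; $\varphi$ is valid if true at every state of every $\mathcal L$-model; $\varphi\equiv\psi$ means $[\![\varphi]\!]=[\![\psi]\!]$ in every $\mathcal L$-model; $\vartheta\models\chi$ means every state of every model satisfying $\vartheta$ satisfies $\chi$. For programs, $A\preceq B$ means $\to_A\subseteq\to_B$ in every $\mathcal L$-model (for a sequence, $A_1A_2\cdots A_n\preceq B$ refers to the composed relation). *)

theory Defs
  imports "HOL-Library.Countable"
begin

text \<open>Atomic formulas, atomic programs and agent names are
  countable types ('p, 'a, 'i); type variables are nonempty, and the three sets
  are disjoint because they live in different types.\<close>

datatype ('p::countable, 'a::countable, 'i::countable) fm =
    Atom 'p
  | Neg "('p,'a,'i) fm"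
  | Box "('p,'a,'i) prog" "('p,'a,'i) fm"
  | Cap 'i "('p,'a,'i) prog"
and ('p, 'a, 'i) prog =
    AtP 'a
  | Test "('p,'a,'i) fm"
  | Arrow "('p,'a,'i) fm" "('p,'a,'i) fm"
  | Seq "('p,'a,'i) prog" "('p,'a,'i) prog"
  | Choice "('p,'a,'i) prog" "('p,'a,'i) prog"
  | Star "('p,'a,'i) prog"

definition imp :: "('p::countable,'a::countable,'i::countable) fm \<Rightarrow> ('p,'a,'i) fm \<Rightarrow> ('p,'a,'i) fm" where
  "imp \<phi> \<psi> = Box (Test \<phi>) \<psi>"

fun in_Sigma :: "('p::countable,'a::countable,'i::countable) prog \<Rightarrow> bool" where
  "in_Sigma (AtP a) = True"
| "in_Sigma (Test \<phi>) = True"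
| "in_Sigma (Arrow \<phi> \<psi>) = True"
| "in_Sigma _ = False"

fun in_Sigma_tilde :: "('p::countable,'a::countable,'i::countable) prog \<Rightarrow> bool" where
  "in_Sigma_tilde (AtP a) = True"
| "in_Sigma_tilde (Arrow \<phi> \<psi>) = True"
| "in_Sigma_tilde _ = False"

inductive Sigma_plus :: "('p::countable,'a::countable,'i::countable) prog \<Rightarrow> bool" where
  "in_Sigma A \<Longrightarrow> Sigma_plus A"
| "Sigma_plus A \<Longrightarrow> Sigma_plus B \<Longrightarrow> Sigma_plus (Seq A B)"

inductive Sigma_tilde_plus :: "('p::countable,'a::countable,'i::countable) prog \<Rightarrow> bool" where
  "in_Sigma_tilde A \<Longrightarrow> Sigma_tilde_plus A"
| "Sigma_tilde_plus A \<Longrightarrow> Sigma_tilde_plus B \<Longrightarrow> Sigma_tilde_plus (Seq A B)"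

text \<open>An L-model over state set UNIV :: 'w set: atomic relations ra, valuation val,
  agent capability sets ag, together with the interpretation I (formulas) and R
  (programs) satisfying all semantic clauses, and the normality condition.\<close>
definition lmodel ::
  "('a \<Rightarrow> 'w rel) \<Rightarrow> ('p \<Rightarrow> 'w set) \<Rightarrow> ('i \<Rightarrow> 'w \<Rightarrow> 'w rel)
   \<Rightarrow> (('p::countable,'a::countable,'i::countable) fm \<Rightarrow> 'w set) \<Rightarrow> (('p,'a,'i) prog \<Rightarrow> 'w rel) \<Rightarrow> bool" where
  "lmodel ra val ag I R \<longleftrightarrow>
     (\<forall>p. I (Atom p) = val p) \<and>
     (\<forall>\<phi>. I (Neg \<phi>) = - I \<phi>) \<and>
     (\<forall>A \<phi>. I (Box A \<phi>) = {w. \<forall>w'. (w, w') \<in> R A \<longrightarrow> w' \<in> I \<phi>}) \<and>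
     (\<forall>i a. I (Cap i (AtP a)) = {w. ra a \<subseteq> ag i w}) \<and>
     (\<forall>i \<phi>. I (Cap i (Test \<phi>)) = UNIV) \<and>
     (\<forall>i \<phi> \<psi>. I (Cap i (Arrow \<phi> \<psi>)) = {w. R (Arrow \<phi> \<psi>) \<subseteq> ag i w}) \<and>
     (\<forall>i A B. I (Cap i (Seq A B)) =
        {w \<in> I (Cap i A). \<forall>w'. (w, w') \<in> R A \<longrightarrow> w' \<in> I (Cap i B)}) \<and>
     (\<forall>i A B. I (Cap i (Choice A B)) = I (Cap i A) \<inter> I (Cap i B)) \<and>
     (\<forall>i A. I (Cap i (Star A)) =
        \<Union>{I \<phi> | \<phi>. I \<phi> \<subseteq> I (Cap i A) \<inter> I (Box A \<phi>)}) \<and>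
     (\<forall>a. R (AtP a) = ra a) \<and>
     (\<forall>\<phi>. R (Test \<phi>) = {(w, w) | w. w \<in> I \<phi>}) \<and>
     (\<forall>A B. R (Seq A B) = R A O R B) \<and>
     (\<forall>A B. R (Choice A B) = R A \<union> R B) \<and>
     (\<forall>A. R (Star A) = (\<Union>n. R A ^^ n)) \<and>
     (\<forall>\<phi> \<psi>. R (Arrow \<phi> \<psi>) =
        \<Union>{R A | A. Sigma_plus A \<and>
                     (\<forall>w \<in> I \<phi>. \<forall>w'. (w, w') \<in> R A \<longrightarrow> w' \<in> I \<psi>)}) \<and>
     (\<forall>i w. ag i w \<subseteq> \<Union>{R A | A. Sigma_plus A}) \<and>
     (\<forall>i w. ag i w =
        \<Union>{R (Arrow \<phi> \<psi>) | \<phi> \<psi>. w \<in> I (Cap i (Arrow \<phi> \<psi>))} \<union>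
        \<Union>{ra a | a. w \<in> I (Cap i (AtP a))})"

definition prog_le :: "'w itself \<Rightarrow> ('p::countable,'a::countable,'i::countable) prog \<Rightarrow> ('p,'a,'i) prog \<Rightarrow> bool" where
  "prog_le _ A B \<longleftrightarrow>
     (\<forall>(ra :: 'a \<Rightarrow> 'w rel) val ag I R. lmodel ra val ag I R \<longrightarrow> R A \<subseteq> R B)"

definition entails :: "'w itself \<Rightarrow> ('p::countable,'a::countable,'i::countable) fm \<Rightarrow> ('p,'a,'i) fm \<Rightarrow> bool" where
  "entails _ \<theta> \<chi> \<longleftrightarrow>
     (\<forall>(ra :: 'a \<Rightarrow> 'w rel) val ag I R. lmodel ra val ag I R \<longrightarrow> I \<theta> \<subseteq> I \<chi>)"

end

theory Submission
  imports Defs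
begin

text \<open>Every program relation is covered by relations of \<open>\<Sigma>\<^sup>+\<close>-programs: atoms and
  arrows are in \<open>\<Sigma>\<close>, choice and composition are handled inductively, and star reduces
  to iterated composition plus the identity, which is the test of a tautology. Hence
  \<open>(\<not>\<phi>)A\<close> and \<open>A\<psi>\<close> are below the \<open>\<Sigma>\<^sup>+\<close>-programs \<open>(\<not>\<phi>)C\<close> and \<open>C\<psi>\<close>, which trivially
  lead from \<open>\<phi>\<close> to \<open>\<psi>\<close>. The decomposition is then immediate: \<open>\<phi> \<Rightarrow> \<psi>\<close> itself lies in \<open>\<tilde>\<Sigma>\<^sup>+\<close>, and
  conversely the test \<open>\<phi> \<rightarrow> \<psi>\<close> and every \<open>\<tilde>\<Sigma>\<^sup>+\<close>-program leading from \<open>\<phi>\<close> to \<open>\<psi>\<close> is a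
  \<open>\<Sigma>\<^sup>+\<close>-program doing so.\<close>

lemma Sigma_plus_AtP [intro]: "Sigma_plus (AtP a)"
  and Sigma_plus_Test [intro]: "Sigma_plus (Test \<phi>)"
  and Sigma_plus_Arrow [intro]: "Sigma_plus (Arrow \<phi> \<psi>)"
  by (auto intro: Sigma_plus.intros)

lemma Sigma_tilde_plus_imp_Sigma_plus: "Sigma_tilde_plus A \<Longrightarrow> Sigma_plus A"
proof (induction A rule: Sigma_tilde_plus.induct)
  case (1 A)
  then show ?case by (cases A) auto
qed (auto intro: Sigma_plus.intros(2))

context
  fixes ra val ag
    and I :: "('p::countable,'a::countable,'i::countable) fm \<Rightarrow> 'w set"
    and R :: "('p,'a,'i) prog \<Rightarrow> 'w rel"
  assumes M: "lmodel ra val ag I R"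
begin

lemma I_Neg: "I (Neg \<phi>) = - I \<phi>"
  and I_Box: "I (Box A \<phi>) = {w. \<forall>w'. (w, w') \<in> R A \<longrightarrow> w' \<in> I \<phi>}"
  and R_Test: "R (Test \<phi>) = {(w, w) | w. w \<in> I \<phi>}"
  and R_Seq: "R (Seq A B) = R A O R B"
  and R_Choice: "R (Choice A B) = R A \<union> R B"
  and R_Star: "R (Star A) = (\<Union>n. R A ^^ n)"
  and R_Arrow: "R (Arrow \<phi> \<psi>) =
        \<Union>{R C | C. Sigma_plus C \<and> (\<forall>w \<in> I \<phi>. \<forall>w'. (w, w') \<in> R C \<longrightarrow> w' \<in> I \<psi>)}"
  using M unfolding lmodel_def by (auto simp only:)

lemma in_R_Test_iff: "(w, w') \<in> R (Test \<phi>) \<longleftrightarrow> w' = w \<and> w \<in> I \<phi>"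
  by (auto simp: R_Test)

lemma in_I_imp_iff: "w \<in> I (imp \<phi> \<psi>) \<longleftrightarrow> (w \<in> I \<phi> \<longrightarrow> w \<in> I \<psi>)"
  by (auto simp: imp_def I_Box in_R_Test_iff)

lemma I_Neg_subset_I_imp: "I (Neg \<phi>) \<subseteq> I (imp \<phi> \<psi>)"
  and I_subset_I_imp: "I \<psi> \<subseteq> I (imp \<phi> \<psi>)"
  by (auto simp: in_I_imp_iff I_Neg)

lemma Id_subset_R_Test_tautology: "Id \<subseteq> R (Test (imp \<phi> \<phi>))"
  by (auto simp: in_R_Test_iff in_I_imp_iff)

lemma R_covered_by_Sigma_plus:
  "(w, w') \<in> R A \<Longrightarrow> \<exists>C. Sigma_plus C \<and> (w, w') \<in> R C"
proof (induction A arbitrary: w w' rule: prog.induct[where ?P1.0 = "\<lambda>_. True"])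
  case (Seq A B)
  from Seq.prems obtain v where "(w, v) \<in> R A" "(v, w') \<in> R B"
    by (auto simp: R_Seq)
  then obtain C D where "Sigma_plus C" "(w, v) \<in> R C" "Sigma_plus D" "(v, w') \<in> R D"
    using Seq.IH by blast
  then show ?case
    by (intro exI[of _ "Seq C D"]) (auto simp: R_Seq intro: Sigma_plus.intros(2))
next
  case (Star A)
  have "\<exists>C. Sigma_plus C \<and> (w, w') \<in> R C" if "(w, w') \<in> R A ^^ n" for n w w'
    using that
  proof (induction n arbitrary: w')
    case 0
    then have "(w, w') \<in> R (Test (imp (Atom undefined) (Atom undefined)))"
      using Id_subset_R_Test_tautology by auto
    then show ?case by blast
  next
    case (Suc n)
    then obtain v where "(w, v) \<in> R A ^^ n" "(v, w') \<in> R A"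
      by auto
    then obtain C D where "Sigma_plus C" "(w, v) \<in> R C" "Sigma_plus D" "(v, w') \<in> R D"
      using Suc.IH Star.IH by blast
    then show ?case
    by (intro exI[of _ "Seq C D"]) (auto simp: R_Seq intro: Sigma_plus.intros(2))
  qed
  with Star.prems show ?case by (auto simp: R_Star)
next
  case (Choice A B)
  then show ?case by (auto simp: R_Choice)
qed blast+

lemma in_R_Arrow_if_Sigma_plus:
  assumes "Sigma_plus C" "(w, w') \<in> R C"
    and "\<And>v v'. v \<in> I \<phi> \<Longrightarrow> (v, v') \<in> R C \<Longrightarrow> v' \<in> I \<psi>"
  shows "(w, w') \<in> R (Arrow \<phi> \<psi>)"
  using assms by (auto simp: R_Arrow)

lemma R_Arrow_postcondition:
  "(w, w') \<in> R (Arrow \<phi> \<psi>) \<Longrightarrow> w \<in> I \<phi> \<Longrightarrow> w' \<in> I \<psi>"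
  by (auto simp: R_Arrow)

lemma R_Seq_Test_Neg_subset_R_Arrow: "R (Seq (Test (Neg \<phi>)) A) \<subseteq> R (Arrow \<phi> \<psi>)"
proof (rule subrelI)
  fix w w' assume "(w, w') \<in> R (Seq (Test (Neg \<phi>)) A)"
  then have "w \<notin> I \<phi>" and "(w, w') \<in> R A"
    by (auto simp: R_Seq in_R_Test_iff I_Neg)
  moreover obtain C where "Sigma_plus C" "(w, w') \<in> R C"
    using R_covered_by_Sigma_plus \<open>(w, w') \<in> R A\<close> by blast
  ultimately show "(w, w') \<in> R (Arrow \<phi> \<psi>)"
    by (intro in_R_Arrow_if_Sigma_plus[of "Seq (Test (Neg \<phi>)) C"])
       (auto simp: R_Seq in_R_Test_iff I_Neg intro: Sigma_plus.intros(2))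
qed

lemma R_Seq_Test_subset_R_Arrow: "R (Seq A (Test \<psi>)) \<subseteq> R (Arrow \<phi> \<psi>)"
proof (rule subrelI)
  fix w w' assume "(w, w') \<in> R (Seq A (Test \<psi>))"
  then have "w' \<in> I \<psi>" and "(w, w') \<in> R A"
    by (auto simp: R_Seq in_R_Test_iff)
  moreover obtain C where "Sigma_plus C" "(w, w') \<in> R C"
    using R_covered_by_Sigma_plus \<open>(w, w') \<in> R A\<close> by blast
  ultimately show "(w, w') \<in> R (Arrow \<phi> \<psi>)"
    by (intro in_R_Arrow_if_Sigma_plus[of "Seq C (Test \<psi>)"])
       (auto simp: R_Seq in_R_Test_iff intro: Sigma_plus.intros(2))
qed

lemma R_Test_subset_R_Arrow_iff: "R (Test \<chi>) \<subseteq> R (Arrow \<phi> \<psi>) \<longleftrightarrow> I \<chi> \<subseteq> I (imp \<phi> \<psi>)"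
proof
  assume Test_le: "R (Test \<chi>) \<subseteq> R (Arrow \<phi> \<psi>)"
  show "I \<chi> \<subseteq> I (imp \<phi> \<psi>)"
  proof
    fix w assume "w \<in> I \<chi>"
    with Test_le have "(w, w) \<in> R (Arrow \<phi> \<psi>)"
      by (auto simp: in_R_Test_iff)
    then show "w \<in> I (imp \<phi> \<psi>)"
      unfolding in_I_imp_iff by (blast intro: R_Arrow_postcondition)
  qed
next
  assume "I \<chi> \<subseteq> I (imp \<phi> \<psi>)"
  then show "R (Test \<chi>) \<subseteq> R (Arrow \<phi> \<psi>)"
    by (auto simp: in_R_Test_iff in_I_imp_iff intro!: in_R_Arrow_if_Sigma_plus[of "Test \<chi>"])
qed

lemma R_Arrow_decomposition:
  "R (Arrow \<phi> \<psi>) = R (Test (imp \<phi> \<psi>)) \<union>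
     \<Union>{R B | B. Sigma_tilde_plus B \<and> (\<forall>w w'. (w, w') \<in> R B \<and> w \<in> I \<phi> \<longrightarrow> w' \<in> I \<psi>)}"
    (is "_ = _ \<union> ?tilde")
proof
  have "Sigma_tilde_plus (Arrow \<phi> \<psi>)"
    by (auto intro: Sigma_tilde_plus.intros)
  then show "R (Arrow \<phi> \<psi>) \<subseteq> R (Test (imp \<phi> \<psi>)) \<union> ?tilde"
    using R_Arrow_postcondition by blast
  have "?tilde \<subseteq> R (Arrow \<phi> \<psi>)"
  proof (rule subsetI)
    fix x assume "x \<in> ?tilde"
    then obtain B where B: "Sigma_tilde_plus B" "x \<in> R B"
      "\<forall>w w'. (w, w') \<in> R B \<and> w \<in> I \<phi> \<longrightarrow> w' \<in> I \<psi>"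
      by blast
    obtain w w' where x: "x = (w, w')"
      by (cases x)
    show "x \<in> R (Arrow \<phi> \<psi>)"
      unfolding x
      by (rule in_R_Arrow_if_Sigma_plus[OF Sigma_tilde_plus_imp_Sigma_plus[OF B(1)]])
         (use B x in auto)
  qed
  moreover have "R (Test (imp \<phi> \<psi>)) \<subseteq> R (Arrow \<phi> \<psi>)"
    by (simp add: R_Test_subset_R_Arrow_iff)
  ultimately show "R (Test (imp \<phi> \<psi>)) \<union> ?tilde \<subseteq> R (Arrow \<phi> \<psi>)"
    by blast
qed

end

lemma prog_leI:
  "(\<And>(ra :: 'a \<Rightarrow> 'w rel) val ag I R. lmodel ra val ag I R \<Longrightarrow> R A \<subseteq> R B)
   \<Longrightarrow> prog_le TYPE('w) A (B :: ('p::countable,'a::countable,'i::countable) prog)"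
  unfolding prog_le_def by blast

theorem mainTheorem2:
  fixes \<phi> \<psi> \<theta> :: "('p::countable,'a::countable,'i::countable) fm"
    and A :: "('p,'a,'i) prog"
  shows "prog_le TYPE('w) (Seq (Test (Neg \<phi>)) A) (Arrow \<phi> \<psi>)
       \<and> prog_le TYPE('w) (Seq A (Test \<psi>)) (Arrow \<phi> \<psi>)
       \<and> prog_le TYPE('w) (Test (Neg \<phi>)) (Arrow \<phi> \<psi>)
       \<and> prog_le TYPE('w) (Test \<psi>) (Arrow \<phi> \<psi>)
       \<and> prog_le TYPE('w) (Test (imp \<phi> \<psi>)) (Arrow \<phi> \<psi>)
       \<and> (prog_le TYPE('w) (Test \<theta>) (Arrow \<phi> \<psi>) \<longleftrightarrow> entails TYPE('w) \<theta> (imp \<phi> \<psi>))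
       \<and> (\<forall>(ra :: 'a \<Rightarrow> 'w rel) val ag I R. lmodel ra val ag I R \<longrightarrow>
           R (Arrow \<phi> \<psi>) =
             R (Test (imp \<phi> \<psi>)) \<union>
             \<Union>{R B | B. Sigma_tilde_plus B \<and>
                    (\<forall>w w'. (w, w') \<in> R B \<and> w \<in> I \<phi> \<longrightarrow> w' \<in> I \<psi>)})"
proof (intro conjI allI impI)
  show "prog_le TYPE('w) (Seq (Test (Neg \<phi>)) A) (Arrow \<phi> \<psi>)"
    by (rule prog_leI) (rule R_Seq_Test_Neg_subset_R_Arrow)
  show "prog_le TYPE('w) (Seq A (Test \<psi>)) (Arrow \<phi> \<psi>)"
    by (rule prog_leI) (rule R_Seq_Test_subset_R_Arrow)
  show "prog_le TYPE('w) (Test (Neg \<phi>)) (Arrow \<phi> \<psi>)"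
    by (rule prog_leI) (simp add: R_Test_subset_R_Arrow_iff I_Neg_subset_I_imp)
  show "prog_le TYPE('w) (Test \<psi>) (Arrow \<phi> \<psi>)"
    by (rule prog_leI) (simp add: R_Test_subset_R_Arrow_iff I_subset_I_imp)
  show "prog_le TYPE('w) (Test (imp \<phi> \<psi>)) (Arrow \<phi> \<psi>)"
    by (rule prog_leI) (simp add: R_Test_subset_R_Arrow_iff)
  show "prog_le TYPE('w) (Test \<theta>) (Arrow \<phi> \<psi>) \<longleftrightarrow> entails TYPE('w) \<theta> (imp \<phi> \<psi>)"
    unfolding prog_le_def entails_def by (simp add: R_Test_subset_R_Arrow_iff)
qed (rule R_Arrow_decomposition)

end
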